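(* Let $G\colon\mathsf{Nom}\to\mathsf{Nom}$ be $GX=2\times X^{\mathbb{A}}\times[\mathbb{A}]X$. The terminal $G$-coalgebra is the nominal set $\mathcal{P}_{\mathsf{fs}}(\overline{\mathbb{A}}^*/{=_\alpha})$ of all bar languages with the structure $\tau(S)=(b,\,a\mapsto S_a,\,S_{\mathord{|}a})$, where $b=1$ if $[\varepsilon]_\alpha\in S$ and $b=0$ otherwise, $S_a=\{[w]_\alpha:[aw]_\alpha\in S\}$, and $S_{\mathord{|}a}=\langle a\rangle\{[w]_\alpha:[\mathord{|}a\,w]_\alpha\in S\}$ for any $a$ fresh for $S$.
   Context: Fix a countably infinite set $\mathbb{A}$ of names; $\mathsf{Nom}$ is the category of nominal sets and equivariant maps; $2=\{0,1\}$ with trivial action; $X^{\mathbb{A}}$ is the exponential (finitely supported functions). $[\mathbb{A}]X=(\mathbb{A}\times X)/\sim$ with $(a,x)\sim(b,y)$ iff $(a\,c)\cdot x=(b\,c)\cdot y$ for fresh $c$; classes $\langle a\rangle x$. $\mathcal{P}_{\mathsf{fs}}Y$ is the nominal set of finitely supported subsets of $Y$; $a$ fresh for $S$ means $a$ not in the least support of $S$. Bar strings are words over $\overline{\mathbb{A}}=\mathbb{A}\cup\{\mathord{|}a:a\in\mathbb{A}\}$ (pointwise action); $=_\alpha$ is the least equivalence relation with $x\,\mathord{|}a\,v=_\alpha x\,\mathord{|}b\,w$ whenever $\langle a\rangle v=\langle b\rangle w$ (i.e. $a=b,v=w$, or $b$ fresh for $v$ and $(a\,b)\cdot v=w$); $[w]_\alpha$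 denotes classes, with action $\pi\cdot[w]_\alpha=[\pi\cdot w]_\alpha$. *)

theory Defs
  imports Main "HOL-Library.Countable" "HOL-Library.Infinite_Typeclass" "HOL-Combinatorics.Perm"
begin

text \<open>Names: a type 'a of class countable and infinite (a countably infinite set of names).\<close>

definition is_action :: "('a perm \<Rightarrow> 'x \<Rightarrow> 'x) \<Rightarrow> 'x set \<Rightarrow> bool" where
  "is_action act X \<longleftrightarrow>
     (\<forall>p. \<forall>x\<in>X. act p x \<in> X) \<and> (\<forall>x\<in>X. act 1 x = x) \<and>
     (\<forall>p q. \<forall>x\<in>X. act (p * q) x = act p (act q x))"

definition supports :: "('a perm \<Rightarrow> 'x \<Rightarrow> 'x) \<Rightarrow> 'a set \<Rightarrow> 'x \<Rightarrow> bool" where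
  "supports act A x \<longleftrightarrow> (\<forall>p. (\<forall>a\<in>A. Perm.apply p a = a) \<longrightarrow> act p x = x)"

definition fin_supp :: "('a perm \<Rightarrow> 'x \<Rightarrow> 'x) \<Rightarrow> 'x \<Rightarrow> bool" where
  "fin_supp act x \<longleftrightarrow> (\<exists>A. finite A \<and> supports act A x)"

definition supp :: "('a perm \<Rightarrow> 'x \<Rightarrow> 'x) \<Rightarrow> 'x \<Rightarrow> 'a set" where
  "supp act x = \<Inter>{A. finite A \<and> supports act A x}"

definition fresh :: "('a perm \<Rightarrow> 'x \<Rightarrow> 'x) \<Rightarrow> 'a \<Rightarrow> 'x \<Rightarrow> bool" where
  "fresh act a x \<longleftrightarrow> a \<notin> supp act x"

definition nominal :: "('a perm \<Rightarrow> 'x \<Rightarrow> 'x) \<Rightarrow> 'x set \<Rightarrow> bool" where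
  "nominal act X \<longleftrightarrow> is_action act X \<and> (\<forall>x\<in>X. fin_supp act x)"

definition equivariant ::
  "('a perm \<Rightarrow> 'x \<Rightarrow> 'x) \<Rightarrow> 'x set \<Rightarrow> ('a perm \<Rightarrow> 'y \<Rightarrow> 'y) \<Rightarrow> 'y set \<Rightarrow> ('x \<Rightarrow> 'y) \<Rightarrow> bool" where
  "equivariant actX X actY Y h \<longleftrightarrow>
     (\<forall>x\<in>X. h x \<in> Y) \<and> (\<forall>p. \<forall>x\<in>X. h (actX p x) = actY p (h x))"

definition fun_act :: "('a perm \<Rightarrow> 'x \<Rightarrow> 'x) \<Rightarrow> 'a perm \<Rightarrow> ('a \<Rightarrow> 'x) \<Rightarrow> ('a \<Rightarrow> 'x)" where
  "fun_act act p f = (\<lambda>a. act p (f (Perm.apply (inverse p) a)))"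

definition exp_carrier :: "('a perm \<Rightarrow> 'x \<Rightarrow> 'x) \<Rightarrow> 'x set \<Rightarrow> ('a \<Rightarrow> 'x) set" where
  "exp_carrier act X = {f. (\<forall>a. f a \<in> X) \<and> fin_supp (fun_act act) f}"

definition abs_rel :: "('a perm \<Rightarrow> 'x \<Rightarrow> 'x) \<Rightarrow> 'a \<times> 'x \<Rightarrow> 'a \<times> 'x \<Rightarrow> bool" where
  "abs_rel act ax by' \<longleftrightarrow> (case ax of (a, x) \<Rightarrow> case by' of (b, y) \<Rightarrow>
     (\<exists>c. c \<noteq> a \<and> c \<noteq> b \<and> fresh act c x \<and> fresh act c y \<and>
          act (Perm.swap a c) x = act (Perm.swap b c) y))"

definition abs_cls :: "('a perm \<Rightarrow> 'x \<Rightarrow> 'x) \<Rightarrow> 'x set \<Rightarrow> 'a \<Rightarrow> 'x \<Rightarrow> ('a \<times> 'x) set" where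
  "abs_cls act X a x = {(b, y). b \<in> UNIV \<and> y \<in> X \<and> abs_rel act (a, x) (b, y)}"

definition abs_carrier :: "('a perm \<Rightarrow> 'x \<Rightarrow> 'x) \<Rightarrow> 'x set \<Rightarrow> ('a \<times> 'x) set set" where
  "abs_carrier act X = {abs_cls act X a x | a x. x \<in> X}"

definition abs_act :: "('a perm \<Rightarrow> 'x \<Rightarrow> 'x) \<Rightarrow> 'a perm \<Rightarrow> ('a \<times> 'x) set \<Rightarrow> ('a \<times> 'x) set" where
  "abs_act act p \<alpha> = (\<lambda>(a, x). (Perm.apply p a, act p x)) ` \<alpha>"

text \<open>[A]h (<a>x) = <a>(h x); the union over representatives is that single class
  whenever h is equivariant.\<close>
definition abs_map :: "('a perm \<Rightarrow> 'y \<Rightarrow> 'y) \<Rightarrow> 'y set \<Rightarrow> ('x \<Rightarrow> 'y) \<Rightarrow> ('a \<times> 'x) set \<Rightarrow> ('a \<times> 'y) set" where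
  "abs_map actY Y h \<alpha> = (\<Union>(a, x)\<in>\<alpha>. abs_cls actY Y a (h x))"

type_synonym ('a, 'x) G = "bool \<times> ('a \<Rightarrow> 'x) \<times> ('a \<times> 'x) set"

definition G_carrier :: "('a perm \<Rightarrow> 'x \<Rightarrow> 'x) \<Rightarrow> 'x set \<Rightarrow> ('a, 'x) G set" where
  "G_carrier act X = UNIV \<times> exp_carrier act X \<times> abs_carrier act X"

definition G_act :: "('a perm \<Rightarrow> 'x \<Rightarrow> 'x) \<Rightarrow> 'a perm \<Rightarrow> ('a, 'x) G \<Rightarrow> ('a, 'x) G" where
  "G_act act p t = (case t of (b, f, \<alpha>) \<Rightarrow> (b, fun_act act p f, abs_act act p \<alpha>))"

definition G_map :: "('a perm \<Rightarrow> 'y \<Rightarrow> 'y) \<Rightarrow> 'y set \<Rightarrow> ('x \<Rightarrow> 'y) \<Rightarrow> ('a, 'x) G \<Rightarrow> ('a, 'y) G" where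
  "G_map actY Y h t = (case t of (b, f, \<alpha>) \<Rightarrow> (b, h \<circ> f, abs_map actY Y h \<alpha>))"

definition G_coalg :: "('a perm \<Rightarrow> 'x \<Rightarrow> 'x) \<Rightarrow> 'x set \<Rightarrow> ('x \<Rightarrow> ('a, 'x) G) \<Rightarrow> bool" where
  "G_coalg act X c \<longleftrightarrow> nominal act X \<and> equivariant act X (G_act act) (G_carrier act X) c"

definition G_hom ::
  "('a perm \<Rightarrow> 'x \<Rightarrow> 'x) \<Rightarrow> 'x set \<Rightarrow> ('x \<Rightarrow> ('a, 'x) G) \<Rightarrow>
   ('a perm \<Rightarrow> 'y \<Rightarrow> 'y) \<Rightarrow> 'y set \<Rightarrow> ('y \<Rightarrow> ('a, 'y) G) \<Rightarrow> ('x \<Rightarrow> 'y) \<Rightarrow> bool" where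
  "G_hom actX X c actY Y d h \<longleftrightarrow> equivariant actX X actY Y h \<and>
     (\<forall>x\<in>X. d (h x) = G_map actY Y h (c x))"

datatype 'a barl = Nm 'a | Bar 'a

fun barl_act :: "'a perm \<Rightarrow> 'a barl \<Rightarrow> 'a barl" where
  "barl_act p (Nm a) = Nm (Perm.apply p a)"
| "barl_act p (Bar a) = Bar (Perm.apply p a)"

definition bs_act :: "'a perm \<Rightarrow> 'a barl list \<Rightarrow> 'a barl list" where
  "bs_act p w = map (barl_act p) w"

fun barl_name :: "'a barl \<Rightarrow> 'a" where
  "barl_name (Nm a) = a" | "barl_name (Bar a) = a"

text \<open>The (least) support of a bar string under the pointwise action: the names occurring in it.\<close>
definition bs_names :: "'a barl list \<Rightarrow> 'a set" where
  "bs_names w = barl_name ` set w"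

text \<open><a>v = <b>w in [A](bar strings): a = b and v = w, or b fresh for v and (a b).v = w.\<close>
definition bs_abs_eq :: "'a \<Rightarrow> 'a barl list \<Rightarrow> 'a \<Rightarrow> 'a barl list \<Rightarrow> bool" where
  "bs_abs_eq a v b w \<longleftrightarrow> (a = b \<and> v = w) \<or> (b \<notin> bs_names v \<and> bs_act (Perm.swap a b) v = w)"

definition alpha_step :: "'a barl list \<Rightarrow> 'a barl list \<Rightarrow> bool" where
  "alpha_step u u' \<longleftrightarrow> (\<exists>x a v b w. u = x @ Bar a # v \<and> u' = x @ Bar b # w \<and> bs_abs_eq a v b w)"

definition alpha_eq :: "'a barl list \<Rightarrow> 'a barl list \<Rightarrow> bool" where
  "alpha_eq = equivclp alpha_step"

definition alpha_cls :: "'a barl list \<Rightarrow> 'a barl list set" where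
  "alpha_cls w = {v. alpha_eq w v}"

definition alpha_classes :: "'a barl list set set" where
  "alpha_classes = range alpha_cls"

definition cls_act :: "'a perm \<Rightarrow> 'a barl list set \<Rightarrow> 'a barl list set" where
  "cls_act p c = (\<Union>w\<in>c. alpha_cls (bs_act p w))"

type_synonym 'a blang = "'a barl list set set"

definition lang_act :: "'a perm \<Rightarrow> 'a blang \<Rightarrow> 'a blang" where
  "lang_act p S = cls_act p ` S"

definition bar_langs :: "'a blang set" where
  "bar_langs = {S. S \<subseteq> alpha_classes \<and> fin_supp lang_act S}"

definition deriv_nm :: "'a blang \<Rightarrow> 'a \<Rightarrow> 'a blang" where
  "deriv_nm S a = {alpha_cls w | w. alpha_cls (Nm a # w) \<in> S}"

definition deriv_bar :: "'a blang \<Rightarrow> 'a \<Rightarrow> 'a blang" where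
  "deriv_bar S a = {alpha_cls w | w. alpha_cls (Bar a # w) \<in> S}"

text \<open>tau(S) = (b, a |-> S_a, S_{|a}) with S_{|a} = <a>{[w] : [|a w] in S} for a fresh for S
  (here a chosen fresh name; independence of the choice is part of the theorem).\<close>
definition tau :: "'a blang \<Rightarrow> ('a, 'a blang) G" where
  "tau S = (alpha_cls [] \<in> S, deriv_nm S,
            (let a = (SOME a. fresh lang_act a S) in abs_cls lang_act bar_langs a (deriv_bar S a)))"

end

theory Submission
  imports Defs
begin

text \<open>A state x of a G-coalgebra (X, c) is sent to the bar language it accepts: the empty
  string is accepted iff the boolean component of c x holds, a letter a leads to the a-th entry
  of the X^A component, and a letter |a leads to the second component y of a representative
  (a, y) of the abstraction in c x; the accepted strings are closed under alpha-equivalence.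
  This map is equivariant, so its values are finitely supported, and it is a coalgebra morphism
  because every bar letter can be renamed to a name fresh for everything in sight. Conversely,
  for any morphism h the equation tau (h x) = G h (c x) decides whether the empty string lies
  in h x and identifies the derivatives of h x, at names and at bar names fresh for x, with
  values of h at successor states. After alpha-renaming a leading bar name to such a fresh
  name, induction on the length of bar strings shows that h is unique.\<close>

unbundle permutation_syntax

section \<open>Nominal sets\<close>

lemma swap_times_swap:
  "c \<noteq> a \<Longrightarrow> d \<noteq> a \<Longrightarrow> \<langle>c \<leftrightarrow> d\<rangle> * \<langle>a \<leftrightarrow> c\<rangle> = \<langle>a \<leftrightarrow> d\<rangle> * \<langle>c \<leftrightarrow> d\<rangle>"
  by (rule perm_eqI) (simp add: apply_times transpose_def swap.rep_eq)

lemma times_swap: "p * \<langle>a \<leftrightarrow> b\<rangle> = \<langle>p \<langle>$\<rangle> a \<leftrightarrow> p \<langle>$\<rangle> b\<rangle> * p"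
  by (rule perm_eqI) (auto simp: apply_times transpose_def swap.rep_eq apply_inj)

lemma swap_via_third:
  "a \<noteq> b \<Longrightarrow> d \<noteq> a \<Longrightarrow> d \<noteq> b \<Longrightarrow> \<langle>a \<leftrightarrow> b\<rangle> = \<langle>a \<leftrightarrow> d\<rangle> * \<langle>b \<leftrightarrow> d\<rangle> * \<langle>a \<leftrightarrow> d\<rangle>"
  by (rule perm_eqI) (simp add: apply_times transpose_def swap.rep_eq)

lemma apply_inverse_apply [simp]: "inverse p \<langle>$\<rangle> (p \<langle>$\<rangle> a) = a"
  by (simp add: apply_sequence)

lemma apply_apply_inverse [simp]: "p \<langle>$\<rangle> (inverse p \<langle>$\<rangle> a) = a"
  by (simp add: apply_sequence)

lemma obtain_fresh_name:
  fixes F :: "'a::infinite set"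
  assumes "finite F"
  obtains c where "c \<notin> F"
  using ex_new_if_finite[OF infinite_UNIV assms] by blast

context
  fixes act :: "'a perm \<Rightarrow> 'x \<Rightarrow> 'x" and X :: "'x set"
  assumes action: "is_action act X"
begin

lemma action_closed: "x \<in> X \<Longrightarrow> act p x \<in> X"
  using action unfolding is_action_def by blast

lemma action_one: "x \<in> X \<Longrightarrow> act 1 x = x"
  using action unfolding is_action_def by blast

lemma action_times: "x \<in> X \<Longrightarrow> act (p * q) x = act p (act q x)"
  using action unfolding is_action_def by blast

lemma action_inverse_act: "x \<in> X \<Longrightarrow> act (inverse p) (act p x) = x"
  using action_times[of x "inverse p" p] by (simp add: action_one)

lemma action_act_inverse: "x \<in> X \<Longrightarrow> act p (act (inverse p) x) = x"
  using action_times[of x p "inverse p"] by (simp add: action_one)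

end

lemma fresh_iff: "fresh act a x \<longleftrightarrow> (\<exists>A. finite A \<and> supports act A x \<and> a \<notin> A)"
  unfolding fresh_def supp_def by auto

lemma finite_supp:
  assumes "fin_supp act x"
  shows "finite (supp act x)"
proof -
  obtain A where "finite A" "supports act A x"
    using assms unfolding fin_supp_def by blast
  then have "supp act x \<subseteq> A"
    unfolding supp_def by blast
  with \<open>finite A\<close> show ?thesis
    by (rule finite_subset[rotated])
qed

lemma nominal_is_action: "nominal act X \<Longrightarrow> is_action act X"
  unfolding nominal_def by blast

lemma nominal_finite_supp: "nominal act X \<Longrightarrow> x \<in> X \<Longrightarrow> finite (supp act x)"
  unfolding nominal_def by (simp add: finite_supp)

lemma supportsD: "supports act A x \<Longrightarrow> (\<And>a. a \<in> A \<Longrightarrow> p \<langle>$\<rangle> a = a) \<Longrightarrow> act p x = x"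
  unfolding supports_def by blast

lemma act_swap_fresh:
  fixes act :: "'a::infinite perm \<Rightarrow> 'x \<Rightarrow> 'x"
  assumes action: "is_action act X" and x: "x \<in> X" and "fresh act a x" "fresh act b x"
  shows "act \<langle>a \<leftrightarrow> b\<rangle> x = x"
proof (cases "a = b")
  case True
  then show ?thesis using action_one[OF action x] by simp
next
  case False
  obtain A B where A: "finite A" "supports act A x" "a \<notin> A"
    and B: "finite B" "supports act B x" "b \<notin> B"
    using assms(3,4) unfolding fresh_iff by blast
  have "finite (A \<union> B \<union> {a, b})"
    using A(1) B(1) by simp
  then obtain d where d: "d \<notin> A \<union> B \<union> {a, b}"
    by (rule obtain_fresh_name)
  have "act \<langle>a \<leftrightarrow> d\<rangle> x = x"
    by (rule supportsD[OF A(2)], rule apply_swap_same) (use A(3) d in auto)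
  moreover have "act \<langle>b \<leftrightarrow> d\<rangle> x = x"
    by (rule supportsD[OF B(2)], rule apply_swap_same) (use B(3) d in auto)
  moreover have "\<langle>a \<leftrightarrow> b\<rangle> = \<langle>a \<leftrightarrow> d\<rangle> * \<langle>b \<leftrightarrow> d\<rangle> * \<langle>a \<leftrightarrow> d\<rangle>"
    using False d by (simp add: swap_via_third)
  ultimately show ?thesis
    by (simp add: action_times[OF action] action_closed[OF action] x)
qed

lemma act_swap_swap_fresh:
  fixes act :: "'a::infinite perm \<Rightarrow> 'x \<Rightarrow> 'x"
  assumes action: "is_action act X" and x: "x \<in> X"
    and "c \<noteq> a" "d \<noteq> a" "fresh act c x" "fresh act d x"
  shows "act \<langle>c \<leftrightarrow> d\<rangle> (act \<langle>a \<leftrightarrow> c\<rangle> x) = act \<langle>a \<leftrightarrow> d\<rangle> x"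
proof -
  have "act \<langle>c \<leftrightarrow> d\<rangle> (act \<langle>a \<leftrightarrow> c\<rangle> x) = act (\<langle>a \<leftrightarrow> d\<rangle> * \<langle>c \<leftrightarrow> d\<rangle>) x"
    using assms(3,4) by (simp add: action_times[OF action x, symmetric] swap_times_swap)
  also have "\<dots> = act \<langle>a \<leftrightarrow> d\<rangle> x"
    using assms by (simp add: action_times[OF action x] act_swap_fresh[OF action x])
  finally show ?thesis .
qed

lemma supports_act:
  assumes times: "\<And>p q. act (p * q) x = act p (act q x)" and A: "supports act A x"
  shows "supports act (apply p ` A) (act p x)"
  unfolding supports_def
proof (intro allI impI)
  fix q assume q: "\<forall>a\<in>apply p ` A. q \<langle>$\<rangle> a = a"
  have "act (inverse p * q * p) x = x"
    using q by (intro supportsD[OF A]) (auto simp: apply_times)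
  then have "act p (act (inverse p * q * p) x) = act p x"
    by simp
  moreover have "p * (inverse p * q * p) = q * p"
    by (simp add: mult.assoc[symmetric])
  ultimately show "act q (act p x) = act p x"
    by (simp add: times[symmetric])
qed

lemma fresh_act:
  assumes action: "is_action act X" and x: "x \<in> X" and "fresh act a x"
  shows "fresh act (p \<langle>$\<rangle> a) (act p x)"
proof -
  obtain A where A: "finite A" "supports act A x" "a \<notin> A"
    using assms(3) by (auto simp: fresh_iff)
  have "supports act (apply p ` A) (act p x)"
    using action_times[OF action x] A(2) by (rule supports_act)
  then show ?thesis
    using A by (auto simp: fresh_iff apply_inj)
qed

lemma fresh_equivariant:
  assumes h: "equivariant actX X actY Y h" and x: "x \<in> X" and "fresh actX a x"
  shows "fresh actY a (h x)"
proof -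
  obtain A where A: "finite A" "supports actX A x" "a \<notin> A"
    using assms(3) by (auto simp: fresh_iff)
  have "supports actY A (h x)"
    using A(2) h x unfolding supports_def equivariant_def by metis
  with A show ?thesis
    unfolding fresh_iff by blast
qed

lemma obtain_fresh_for:
  fixes act :: "'a::infinite perm \<Rightarrow> 'x \<Rightarrow> 'x"
  assumes nom: "nominal act X" and "finite F" "x \<in> X" "y \<in> X"
  obtains c where "c \<notin> F" "fresh act c x" "fresh act c y"
proof -
  have "finite (F \<union> supp act x \<union> supp act y)"
    using assms nominal_finite_supp[OF nom] by simp
  then obtain c where "c \<notin> F \<union> supp act x \<union> supp act y"
    by (rule obtain_fresh_name)
  then show ?thesis
    using that unfolding fresh_def by blast
qed

section \<open>Name abstraction\<close>

lemma abs_rel_iff: "abs_rel act (a, x) (b, y) \<longleftrightarrow>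
  (\<exists>c. c \<noteq> a \<and> c \<noteq> b \<and> fresh act c x \<and> fresh act c y \<and> act \<langle>a \<leftrightarrow> c\<rangle> x = act \<langle>b \<leftrightarrow> c\<rangle> y)"
  unfolding abs_rel_def by simp

context
  fixes act :: "'a::infinite perm \<Rightarrow> 'x \<Rightarrow> 'x" and X :: "'x set"
  assumes nom: "nominal act X"
begin

private lemma action: "is_action act X"
  using nom by (rule nominal_is_action)

lemma abs_rel_any_fresh:
  assumes x: "x \<in> X" and y: "y \<in> X" and r: "abs_rel act (a, x) (b, y)"
    and c: "c \<noteq> a" "c \<noteq> b" "fresh act c x" "fresh act c y"
  shows "act \<langle>a \<leftrightarrow> c\<rangle> x = act \<langle>b \<leftrightarrow> c\<rangle> y"
proof -
  obtain c0 where c0: "c0 \<noteq> a" "c0 \<noteq> b" "fresh act c0 x" "fresh act c0 y"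
    and eq: "act \<langle>a \<leftrightarrow> c0\<rangle> x = act \<langle>b \<leftrightarrow> c0\<rangle> y"
    using r unfolding abs_rel_iff by blast
  have "act \<langle>a \<leftrightarrow> c\<rangle> x = act \<langle>c0 \<leftrightarrow> c\<rangle> (act \<langle>a \<leftrightarrow> c0\<rangle> x)"
    using c0 c by (simp add: act_swap_swap_fresh[OF action x])
  also have "\<dots> = act \<langle>b \<leftrightarrow> c\<rangle> y"
    using c0 c eq by (simp add: act_swap_swap_fresh[OF action y])
  finally show ?thesis .
qed

lemma abs_rel_refl:
  assumes "x \<in> X"
  shows "abs_rel act (a, x) (a, x)"
proof -
  obtain c where "c \<notin> {a}" "fresh act c x"
    using obtain_fresh_for[OF nom, of "{a}" x x] assms by blast
  then show ?thesis
    unfolding abs_rel_iff by auto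
qed

lemma abs_rel_sym: "abs_rel act (a, x) (b, y) \<Longrightarrow> abs_rel act (b, y) (a, x)"
  unfolding abs_rel_iff by metis

lemma abs_rel_trans:
  assumes x: "x \<in> X" and y: "y \<in> X" and z: "z \<in> X"
    and xy: "abs_rel act (a, x) (b, y)" and yz: "abs_rel act (b, y) (e, z)"
  shows "abs_rel act (a, x) (e, z)"
proof -
  obtain c where c: "c \<notin> {a, b, e} \<union> supp act y" "fresh act c x" "fresh act c z"
    using obtain_fresh_for[OF nom, of "{a, b, e} \<union> supp act y" x z]
      nominal_finite_supp[OF nom y] x z
    by blast
  then have "fresh act c y"
    unfolding fresh_def by blast
  with c have "act \<langle>a \<leftrightarrow> c\<rangle> x = act \<langle>e \<leftrightarrow> c\<rangle> z"
    using abs_rel_any_fresh[OF x y xy] abs_rel_any_fresh[OF y z yz] by auto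
  with c show ?thesis
    unfolding abs_rel_iff by auto
qed

lemma abs_cls_memD: "(b, y) \<in> abs_cls act X a x \<Longrightarrow> y \<in> X \<and> abs_rel act (a, x) (b, y)"
  unfolding abs_cls_def by blast

lemma abs_cls_self_mem: "x \<in> X \<Longrightarrow> (a, x) \<in> abs_cls act X a x"
  unfolding abs_cls_def using abs_rel_refl by blast

lemma abs_cls_eqI:
  assumes x: "x \<in> X" and y: "y \<in> X" and r: "abs_rel act (a, x) (b, y)"
  shows "abs_cls act X a x = abs_cls act X b y"
  unfolding abs_cls_def
  using abs_rel_trans[OF x y _ r] abs_rel_trans[OF y x _ abs_rel_sym[OF r]] by blast

lemma abs_cls_swap:
  assumes x: "x \<in> X" and "b \<noteq> a" "fresh act b x"
  shows "abs_cls act X b (act \<langle>a \<leftrightarrow> b\<rangle> x) = abs_cls act X a x"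
proof (rule abs_cls_eqI[symmetric, OF x action_closed[OF action x]])
  obtain c where c: "c \<notin> {a, b}" "fresh act c x"
    using obtain_fresh_for[OF nom, of "{a, b}" x x] x by blast
  then have "fresh act c (act \<langle>a \<leftrightarrow> b\<rangle> x)"
    using fresh_act[OF action x, of c "\<langle>a \<leftrightarrow> b\<rangle>"] by simp
  moreover have "act \<langle>b \<leftrightarrow> c\<rangle> (act \<langle>a \<leftrightarrow> b\<rangle> x) = act \<langle>a \<leftrightarrow> c\<rangle> x"
    using assms c by (simp add: act_swap_swap_fresh[OF action x])
  ultimately show "abs_rel act (a, x) (b, act \<langle>a \<leftrightarrow> b\<rangle> x)"
    using c unfolding abs_rel_iff by auto
qed

lemma abs_cls_eq_swapD:
  assumes x: "x \<in> X" and y: "y \<in> X" and eq: "abs_cls act X b y = abs_cls act X a x"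
    and "b \<noteq> a" "fresh act b x"
  shows "y = act \<langle>a \<leftrightarrow> b\<rangle> x"
proof -
  have r: "abs_rel act (a, x) (b, y)"
    using abs_cls_self_mem[OF y, of b] eq by (blast dest: abs_cls_memD)
  obtain c where c: "c \<notin> {a, b}" "fresh act c x" "fresh act c y"
    using obtain_fresh_for[OF nom, of "{a, b}" x y] x y by blast
  have "y = act \<langle>b \<leftrightarrow> c\<rangle> (act \<langle>b \<leftrightarrow> c\<rangle> y)"
    by (simp add: action_times[OF action y, symmetric] action_one[OF action y])
  also have "\<dots> = act \<langle>c \<leftrightarrow> b\<rangle> (act \<langle>a \<leftrightarrow> c\<rangle> x)"
    using abs_rel_any_fresh[OF x y r, of c] c by (simp add: swap_sym)
  also have "\<dots> = act \<langle>a \<leftrightarrow> b\<rangle> x"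
    using assms(4,5) c by (simp add: act_swap_swap_fresh[OF action x])
  finally show ?thesis .
qed

lemma abs_rel_eqvt:
  assumes x: "x \<in> X" and y: "y \<in> X" and r: "abs_rel act (a, x) (b, y)"
  shows "abs_rel act (p \<langle>$\<rangle> a, act p x) (p \<langle>$\<rangle> b, act p y)"
proof -
  obtain c where c: "c \<noteq> a" "c \<noteq> b" "fresh act c x" "fresh act c y"
    and eq: "act \<langle>a \<leftrightarrow> c\<rangle> x = act \<langle>b \<leftrightarrow> c\<rangle> y"
    using r unfolding abs_rel_iff by blast
  have swap_eqvt: "act \<langle>p \<langle>$\<rangle> e \<leftrightarrow> p \<langle>$\<rangle> c\<rangle> (act p z) = act p (act \<langle>e \<leftrightarrow> c\<rangle> z)"
    if "z \<in> X" for e z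
    using action_times[OF action that] times_swap[of p e c] by metis
  show ?thesis
    unfolding abs_rel_iff
  proof (intro exI conjI)
    show "p \<langle>$\<rangle> c \<noteq> p \<langle>$\<rangle> a" "p \<langle>$\<rangle> c \<noteq> p \<langle>$\<rangle> b"
      using c by (simp_all add: apply_inj)
    show "fresh act (p \<langle>$\<rangle> c) (act p x)" "fresh act (p \<langle>$\<rangle> c) (act p y)"
      using c by (simp_all add: fresh_act[OF action x] fresh_act[OF action y])
    show "act \<langle>p \<langle>$\<rangle> a \<leftrightarrow> p \<langle>$\<rangle> c\<rangle> (act p x) = act \<langle>p \<langle>$\<rangle> b \<leftrightarrow> p \<langle>$\<rangle> c\<rangle> (act p y)"
      using eq by (simp add: swap_eqvt x y)
  qed
qed

lemma abs_act_cls_subset: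
  assumes x: "x \<in> X"
  shows "abs_act act p (abs_cls act X a x) \<subseteq> abs_cls act X (p \<langle>$\<rangle> a) (act p x)"
  unfolding abs_act_def abs_cls_def
  using abs_rel_eqvt[OF x] action_closed[OF action] by auto

lemma abs_act_cls:
  assumes x: "x \<in> X"
  shows "abs_act act p (abs_cls act X a x) = abs_cls act X (p \<langle>$\<rangle> a) (act p x)"
proof
  show "abs_cls act X (p \<langle>$\<rangle> a) (act p x) \<subseteq> abs_act act p (abs_cls act X a x)"
  proof
    fix z assume z: "z \<in> abs_cls act X (p \<langle>$\<rangle> a) (act p x)"
    obtain b y where z_eq: "z = (b, y)" by fastforce
    have y: "y \<in> X"
      using z z_eq by (blast dest: abs_cls_memD)
    have "abs_act act (inverse p) (abs_cls act X (p \<langle>$\<rangle> a) (act p x)) \<subseteq> abs_cls act X a x"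
      using abs_act_cls_subset[where x = "act p x" and p = "inverse p" and a = "p \<langle>$\<rangle> a"]
      by (simp add: action_closed[OF action x] action_inverse_act[OF action x])
    then have "(inverse p \<langle>$\<rangle> b, act (inverse p) y) \<in> abs_cls act X a x"
      using z z_eq unfolding abs_act_def by blast
    then show "z \<in> abs_act act p (abs_cls act X a x)"
      unfolding abs_act_def z_eq using action_act_inverse[OF action y]
      by (auto intro!: image_eqI[where x = "(inverse p \<langle>$\<rangle> b, act (inverse p) y)"])
  qed
qed (rule abs_act_cls_subset[OF x])

end

lemma abs_rel_equivariant:
  assumes h: "equivariant actX X actY Y h" and x: "x \<in> X" and y: "y \<in> X"
    and r: "abs_rel actX (a, x) (b, y)"
  shows "abs_rel actY (a, h x) (b, h y)"
proof -
  obtain c where c: "c \<noteq> a" "c \<noteq> b" "fresh actX c x" "fresh actX c y"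
    and eq: "actX \<langle>a \<leftrightarrow> c\<rangle> x = actX \<langle>b \<leftrightarrow> c\<rangle> y"
    using r unfolding abs_rel_iff by blast
  have "actY \<langle>a \<leftrightarrow> c\<rangle> (h x) = actY \<langle>b \<leftrightarrow> c\<rangle> (h y)"
    using h x y eq unfolding equivariant_def by metis
  with c show ?thesis
    unfolding abs_rel_iff by (blast intro: fresh_equivariant[OF h x] fresh_equivariant[OF h y])
qed

lemma abs_map_cls:
  fixes actX :: "'a::infinite perm \<Rightarrow> 'x \<Rightarrow> 'x"
  assumes nomX: "nominal actX X" and nomY: "nominal actY Y" and h: "equivariant actX X actY Y h"
    and x: "x \<in> X"
  shows "abs_map actY Y h (abs_cls actX X a x) = abs_cls actY Y a (h x)"
proof -
  have hX: "\<And>z. z \<in> X \<Longrightarrow> h z \<in> Y"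
    using h unfolding equivariant_def by blast
  have "abs_cls actY Y b (h y) = abs_cls actY Y a (h x)" if "(b, y) \<in> abs_cls actX X a x" for b y
    using that abs_cls_memD[OF nomX] abs_rel_equivariant[OF h x] abs_cls_eqI[OF nomY] hX x
    by (metis abs_rel_sym)
  then show ?thesis
    unfolding abs_map_def using abs_cls_self_mem[OF nomX x] by blast
qed

section \<open>Bar strings and alpha-equivalence\<close>

lemma barl_act_times: "barl_act (p * q) l = barl_act p (barl_act q l)"
  by (cases l) (simp_all add: apply_sequence)

lemma barl_act_one [simp]: "barl_act 1 l = l"
  by (cases l) simp_all

lemma barl_name_act [simp]: "barl_name (barl_act p l) = p \<langle>$\<rangle> (barl_name l)"
  by (cases l) simp_all

lemma bs_act_Nil [simp]: "bs_act p [] = []"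
  unfolding bs_act_def by simp

lemma bs_act_Cons [simp]: "bs_act p (l # w) = barl_act p l # bs_act p w"
  unfolding bs_act_def by simp

lemma bs_act_append [simp]: "bs_act p (u @ w) = bs_act p u @ bs_act p w"
  unfolding bs_act_def by simp

lemma length_bs_act [simp]: "length (bs_act p w) = length w"
  unfolding bs_act_def by simp

lemma bs_act_times: "bs_act (p * q) w = bs_act p (bs_act q w)"
  by (induct w) (simp_all add: barl_act_times)

lemma bs_act_one [simp]: "bs_act 1 w = w"
  by (induct w) simp_all

lemma bs_act_inverse_act [simp]: "bs_act (inverse p) (bs_act p w) = w"
  by (simp add: bs_act_times[symmetric])

lemma bs_act_act_inverse [simp]: "bs_act p (bs_act (inverse p) w) = w"
  by (simp add: bs_act_times[symmetric])

lemma is_action_bs_act: "is_action bs_act UNIV"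
  unfolding is_action_def by (simp add: bs_act_times)

lemma bs_names_Cons [simp]: "bs_names (l # w) = insert (barl_name l) (bs_names w)"
  unfolding bs_names_def by simp

lemma finite_bs_names [simp]: "finite (bs_names w)"
  unfolding bs_names_def by simp

lemma bs_names_act: "bs_names (bs_act p w) = apply p ` bs_names w"
  unfolding bs_names_def bs_act_def by (induct w) auto

lemma supports_bs_names: "supports bs_act (bs_names w) w"
  unfolding supports_def
proof (intro allI impI)
  fix p :: "'a perm" assume "\<forall>a\<in>bs_names w. p \<langle>$\<rangle> a = a"
  then show "bs_act p w = w"
  proof (induct w)
    case (Cons l w)
    then show ?case by (cases l) simp_all
  qed simp
qed

lemma fresh_bs_act: "a \<notin> bs_names w \<Longrightarrow> fresh bs_act a w"
  unfolding fresh_iff using supports_bs_names finite_bs_names by blast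

lemma bs_act_swap_swap_fresh:
  fixes c :: "'a::infinite"
  assumes "c \<noteq> a" "d \<noteq> a" "c \<notin> bs_names w" "d \<notin> bs_names w"
  shows "bs_act \<langle>c \<leftrightarrow> d\<rangle> (bs_act \<langle>a \<leftrightarrow> c\<rangle> w) = bs_act \<langle>a \<leftrightarrow> d\<rangle> w"
  using assms by (simp add: act_swap_swap_fresh[OF is_action_bs_act] fresh_bs_act)

lemma bs_abs_eq_eqvt:
  assumes "bs_abs_eq a v b w"
  shows "bs_abs_eq (p \<langle>$\<rangle> a) (bs_act p v) (p \<langle>$\<rangle> b) (bs_act p w)"
proof (cases "a = b \<and> v = w")
  case False
  then have "b \<notin> bs_names v" "bs_act \<langle>a \<leftrightarrow> b\<rangle> v = w"
    using assms unfolding bs_abs_eq_def by auto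
  then have "p \<langle>$\<rangle> b \<notin> bs_names (bs_act p v)"
    and "bs_act \<langle>p \<langle>$\<rangle> a \<leftrightarrow> p \<langle>$\<rangle> b\<rangle> (bs_act p v) = bs_act p w"
    by (auto simp: bs_names_act apply_inj bs_act_times[symmetric] times_swap[symmetric])
  then show ?thesis
    unfolding bs_abs_eq_def by blast
qed (simp add: bs_abs_eq_def)

lemma alpha_step_eqvt: "alpha_step u u' \<Longrightarrow> alpha_step (bs_act p u) (bs_act p u')"
  unfolding alpha_step_def
proof (elim exE conjE)
  fix x a v b w
  assume "u = x @ Bar a # v" "u' = x @ Bar b # w" "bs_abs_eq a v b w"
  then show "\<exists>x a v b w. bs_act p u = x @ Bar a # v \<and> bs_act p u' = x @ Bar b # w
      \<and> bs_abs_eq a v b w"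
    by (intro exI[of _ "bs_act p x"] exI[of _ "p \<langle>$\<rangle> a"] exI[of _ "bs_act p v"]
        exI[of _ "p \<langle>$\<rangle> b"] exI[of _ "bs_act p w"]) (simp add: bs_abs_eq_eqvt)
qed

lemma alpha_step_Cons: "alpha_step u v \<Longrightarrow> alpha_step (l # u) (l # v)"
  unfolding alpha_step_def by (metis append_Cons)

lemma alpha_eq_refl [simp]: "alpha_eq u u"
  unfolding alpha_eq_def by simp

lemma alpha_eq_sym: "alpha_eq u v \<Longrightarrow> alpha_eq v u"
  unfolding alpha_eq_def by (rule equivclp_sym)

lemma alpha_eq_trans: "alpha_eq u v \<Longrightarrow> alpha_eq v w \<Longrightarrow> alpha_eq u w"
  unfolding alpha_eq_def by (rule equivclp_trans)

lemma alpha_eq_eqvt: "alpha_eq u v \<Longrightarrow> alpha_eq (bs_act p u) (bs_act p v)"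
  unfolding alpha_eq_def
proof (induction rule: equivclp_induct)
  case (step y z)
  then show ?case
    using alpha_step_eqvt by (metis equivclp_into_equivclp)
qed simp

lemma alpha_eq_Cons: "alpha_eq u v \<Longrightarrow> alpha_eq (l # u) (l # v)"
  unfolding alpha_eq_def
proof (induction rule: equivclp_induct)
  case (step y z)
  then show ?case
    using alpha_step_Cons by (metis equivclp_into_equivclp)
qed simp

lemma alpha_eq_rename: "d \<notin> bs_names v \<Longrightarrow> alpha_eq (Bar a # v) (Bar d # bs_act \<langle>a \<leftrightarrow> d\<rangle> v)"
  unfolding alpha_eq_def
  by (rule r_into_equivclp) (unfold alpha_step_def bs_abs_eq_def, metis append.left_neutral)

definition alpha_abs :: "'a \<Rightarrow> 'a barl list \<Rightarrow> 'a \<Rightarrow> 'a barl list \<Rightarrow> bool" where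
  "alpha_abs b v c w \<longleftrightarrow> (\<forall>d. d \<notin> bs_names v \<union> bs_names w \<union> {b, c} \<longrightarrow>
     alpha_eq (bs_act \<langle>b \<leftrightarrow> d\<rangle> v) (bs_act \<langle>c \<leftrightarrow> d\<rangle> w))"

lemma alpha_absI:
  fixes d :: "'a::infinite"
  assumes d: "d \<notin> bs_names v \<union> bs_names w \<union> {b, c}"
    and eq: "alpha_eq (bs_act \<langle>b \<leftrightarrow> d\<rangle> v) (bs_act \<langle>c \<leftrightarrow> d\<rangle> w)"
  shows "alpha_abs b v c w"
  unfolding alpha_abs_def
proof (intro allI impI)
  fix e assume e: "e \<notin> bs_names v \<union> bs_names w \<union> {b, c}"
  have "alpha_eq (bs_act \<langle>d \<leftrightarrow> e\<rangle> (bs_act \<langle>b \<leftrightarrow> d\<rangle> v)) (bs_act \<langle>d \<leftrightarrow> e\<rangle> (bs_act \<langle>c \<leftrightarrow> d\<rangle> w))"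
    using eq by (rule alpha_eq_eqvt)
  moreover have "bs_act \<langle>d \<leftrightarrow> e\<rangle> (bs_act \<langle>b \<leftrightarrow> d\<rangle> v) = bs_act \<langle>b \<leftrightarrow> e\<rangle> v"
    using d e by (intro bs_act_swap_swap_fresh) auto
  moreover have "bs_act \<langle>d \<leftrightarrow> e\<rangle> (bs_act \<langle>c \<leftrightarrow> d\<rangle> w) = bs_act \<langle>c \<leftrightarrow> e\<rangle> w"
    using d e by (intro bs_act_swap_swap_fresh) auto
  ultimately show "alpha_eq (bs_act \<langle>b \<leftrightarrow> e\<rangle> v) (bs_act \<langle>c \<leftrightarrow> e\<rangle> w)"
    by simp
qed

lemma alpha_abs_same: "alpha_eq v w \<Longrightarrow> alpha_abs b v b w"
  unfolding alpha_abs_def by (blast intro: alpha_eq_eqvt)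

lemma alpha_abs_sym: "alpha_abs b v c w \<Longrightarrow> alpha_abs c w b v"
  unfolding alpha_abs_def by (auto intro: alpha_eq_sym)

lemma alpha_abs_trans:
  fixes b :: "'a::infinite"
  assumes vw: "alpha_abs b v c w" and wu: "alpha_abs c w e u"
  shows "alpha_abs b v e u"
proof -
  have "finite (bs_names v \<union> bs_names w \<union> bs_names u \<union> {b, c, e})"
    by simp
  then obtain d where d: "d \<notin> bs_names v \<union> bs_names w \<union> bs_names u \<union> {b, c, e}"
    by (rule obtain_fresh_name)
  then have "alpha_eq (bs_act \<langle>b \<leftrightarrow> d\<rangle> v) (bs_act \<langle>c \<leftrightarrow> d\<rangle> w)"
    and "alpha_eq (bs_act \<langle>c \<leftrightarrow> d\<rangle> w) (bs_act \<langle>e \<leftrightarrow> d\<rangle> u)"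
    using vw wu unfolding alpha_abs_def by auto
  with d show ?thesis
    by (intro alpha_absI[of d]) (auto intro: alpha_eq_trans)
qed

lemma bs_abs_eq_imp_alpha_abs:
  fixes a :: "'a::infinite"
  assumes "bs_abs_eq a v b w"
  shows "alpha_abs a v b w"
proof (cases "a = b")
  case True
  with assms have "v = w"
    unfolding bs_abs_eq_def by auto
  with True show ?thesis
    by (simp add: alpha_abs_same)
next
  case False
  with assms have b: "b \<notin> bs_names v" and w: "w = bs_act \<langle>a \<leftrightarrow> b\<rangle> v"
    unfolding bs_abs_eq_def by auto
  show ?thesis
    unfolding alpha_abs_def
  proof (intro allI impI)
    fix d assume "d \<notin> bs_names v \<union> bs_names w \<union> {a, b}"
    then have "bs_act \<langle>b \<leftrightarrow> d\<rangle> w = bs_act \<langle>a \<leftrightarrow> d\<rangle> v"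
      using False b unfolding w by (intro bs_act_swap_swap_fresh) auto
    then show "alpha_eq (bs_act \<langle>a \<leftrightarrow> d\<rangle> v) (bs_act \<langle>b \<leftrightarrow> d\<rangle> w)"
      by simp
  qed
qed

text \<open>An equivalence relation containing alpha_step, hence containing alpha_eq: this yields the
  inversion rules for alpha_eq at the head of a bar string.\<close>

definition alpha_head :: "'a barl list \<Rightarrow> 'a barl list \<Rightarrow> bool" where
  "alpha_head u u' \<longleftrightarrow> (u = [] \<and> u' = [])
     \<or> (\<exists>a v w. u = Nm a # v \<and> u' = Nm a # w \<and> alpha_eq v w)
     \<or> (\<exists>b v c w. u = Bar b # v \<and> u' = Bar c # w \<and> alpha_abs b v c w)"

lemma alpha_head_refl: "alpha_head u u"
proof (cases u)
  case (Cons l v)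
  then show ?thesis
    unfolding alpha_head_def by (cases l) (auto intro: alpha_abs_same)
qed (simp add: alpha_head_def)

lemma alpha_head_sym: "alpha_head u u' \<Longrightarrow> alpha_head u' u"
  unfolding alpha_head_def by (auto intro: alpha_eq_sym alpha_abs_sym)

lemma alpha_head_trans:
  fixes u :: "'a::infinite barl list"
  shows "alpha_head u u' \<Longrightarrow> alpha_head u' u'' \<Longrightarrow> alpha_head u u''"
  unfolding alpha_head_def by (auto intro: alpha_eq_trans alpha_abs_trans)

lemma alpha_step_imp_alpha_head:
  fixes u :: "'a::infinite barl list"
  assumes "alpha_step u u'"
  shows "alpha_head u u'"
proof -
  obtain x a v b w where u: "u = x @ Bar a # v" and u': "u' = x @ Bar b # w"
    and vw: "bs_abs_eq a v b w"
    using assms unfolding alpha_step_def by blast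
  show ?thesis
  proof (cases x)
    case Nil
    then show ?thesis
      using bs_abs_eq_imp_alpha_abs[OF vw] unfolding alpha_head_def u u' by simp
  next
    case (Cons l x')
    have "alpha_eq (x' @ Bar a # v) (x' @ Bar b # w)"
      unfolding alpha_eq_def alpha_step_def using vw by blast
    then show ?thesis
      unfolding alpha_head_def u u' Cons by (cases l) (auto intro: alpha_abs_same)
  qed
qed

lemma alpha_eq_imp_alpha_head:
  fixes u :: "'a::infinite barl list"
  assumes "alpha_eq u u'"
  shows "alpha_head u u'"
  using assms unfolding alpha_eq_def
proof (induction rule: equivclp_induct)
  case (step y z)
  then show ?case
    using alpha_step_imp_alpha_head alpha_head_sym alpha_head_trans by metis
qed (rule alpha_head_refl)

lemma alpha_eq_NilD:
  fixes u :: "'a::infinite barl list"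
  shows "alpha_eq [] u \<Longrightarrow> u = []"
  using alpha_eq_imp_alpha_head unfolding alpha_head_def by blast

lemma alpha_eq_NmD:
  fixes u :: "'a::infinite barl list"
  shows "alpha_eq (Nm a # v) u \<Longrightarrow> \<exists>w. u = Nm a # w \<and> alpha_eq v w"
  using alpha_eq_imp_alpha_head unfolding alpha_head_def by blast

lemma alpha_eq_BarD:
  fixes u :: "'a::infinite barl list"
  shows "alpha_eq (Bar b # v) u \<Longrightarrow> \<exists>c w. u = Bar c # w \<and> alpha_abs b v c w"
  using alpha_eq_imp_alpha_head unfolding alpha_head_def by blast

section \<open>Bar languages\<close>

lemma alpha_cls_eq_iff: "alpha_cls u = alpha_cls v \<longleftrightarrow> alpha_eq u v"
proof
  assume "alpha_cls u = alpha_cls v"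
  then show "alpha_eq u v"
    unfolding alpha_cls_def by (metis alpha_eq_refl mem_Collect_eq)
next
  assume "alpha_eq u v"
  then have "alpha_eq u = alpha_eq v"
    by (blast intro: alpha_eq_trans alpha_eq_sym)
  then show "alpha_cls u = alpha_cls v"
    unfolding alpha_cls_def by simp
qed

lemma alpha_cls_in_alpha_classes [simp]: "alpha_cls w \<in> alpha_classes"
  unfolding alpha_classes_def by simp

lemma alpha_classesE: "C \<in> alpha_classes \<Longrightarrow> (\<And>w. C = alpha_cls w \<Longrightarrow> P) \<Longrightarrow> P"
  unfolding alpha_classes_def by blast

lemma alpha_classes_eqI:
  assumes "A \<subseteq> alpha_classes" "B \<subseteq> alpha_classes" "\<And>w. alpha_cls w \<in> A \<longleftrightarrow> alpha_cls w \<in> B"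
  shows "A = B"
proof (intro set_eqI iffI)
  fix C assume "C \<in> A"
  then show "C \<in> B" using assms by (metis alpha_classesE subsetD)
next
  fix C assume "C \<in> B"
  then show "C \<in> A" using assms by (metis alpha_classesE subsetD)
qed

lemma cls_act_alpha_cls [simp]: "cls_act p (alpha_cls w) = alpha_cls (bs_act p w)"
proof -
  have "alpha_cls (bs_act p v) = alpha_cls (bs_act p w)" if "v \<in> alpha_cls w" for v
    using that alpha_eq_eqvt[of w v p] unfolding alpha_cls_def
    by (simp add: alpha_cls_eq_iff[unfolded alpha_cls_def] alpha_eq_sym)
  moreover have "w \<in> alpha_cls w"
    unfolding alpha_cls_def by simp
  ultimately show ?thesis
    unfolding cls_act_def by blast
qed

lemma mem_lang_act_iff:
  assumes "S \<subseteq> alpha_classes"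
  shows "alpha_cls w \<in> lang_act p S \<longleftrightarrow> alpha_cls (bs_act (inverse p) w) \<in> S"
proof
  assume "alpha_cls w \<in> lang_act p S"
  then obtain C where C: "C \<in> S" "cls_act p C = alpha_cls w"
    unfolding lang_act_def by blast
  obtain u where u: "C = alpha_cls u"
    using C(1) assms by (blast elim: alpha_classesE)
  have "alpha_eq (bs_act p u) w"
    using C(2) u by (simp add: alpha_cls_eq_iff)
  then have "alpha_eq u (bs_act (inverse p) w)"
    using alpha_eq_eqvt[of "bs_act p u" w "inverse p"] by simp
  with C(1) u show "alpha_cls (bs_act (inverse p) w) \<in> S"
    by (simp add: alpha_cls_eq_iff[symmetric])
next
  assume "alpha_cls (bs_act (inverse p) w) \<in> S"
  then show "alpha_cls w \<in> lang_act p S"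
    unfolding lang_act_def by (metis bs_act_act_inverse cls_act_alpha_cls image_eqI)
qed

lemma lang_act_subset: "S \<subseteq> alpha_classes \<Longrightarrow> lang_act p S \<subseteq> alpha_classes"
  unfolding lang_act_def by (auto elim!: alpha_classesE)

lemma lang_act_times:
  "S \<subseteq> alpha_classes \<Longrightarrow> lang_act (p * q) S = lang_act p (lang_act q S)"
  by (rule alpha_classes_eqI) (simp_all add: lang_act_subset mem_lang_act_iff bs_act_times)

lemma lang_act_one: "S \<subseteq> alpha_classes \<Longrightarrow> lang_act 1 S = S"
  by (rule alpha_classes_eqI) (simp_all add: lang_act_subset mem_lang_act_iff)

lemma mem_deriv_nm_iff: "alpha_cls v \<in> deriv_nm S a \<longleftrightarrow> alpha_cls (Nm a # v) \<in> S"
proof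
  assume "alpha_cls v \<in> deriv_nm S a"
  then obtain w where "alpha_cls v = alpha_cls w" "alpha_cls (Nm a # w) \<in> S"
    unfolding deriv_nm_def by blast
  then show "alpha_cls (Nm a # v) \<in> S"
    by (metis alpha_cls_eq_iff alpha_eq_Cons)
qed (auto simp: deriv_nm_def)

lemma mem_deriv_bar_iff: "alpha_cls v \<in> deriv_bar S a \<longleftrightarrow> alpha_cls (Bar a # v) \<in> S"
proof
  assume "alpha_cls v \<in> deriv_bar S a"
  then obtain w where "alpha_cls v = alpha_cls w" "alpha_cls (Bar a # w) \<in> S"
    unfolding deriv_bar_def by blast
  then show "alpha_cls (Bar a # v) \<in> S"
    by (metis alpha_cls_eq_iff alpha_eq_Cons)
qed (auto simp: deriv_bar_def)

lemma deriv_nm_subset: "deriv_nm S a \<subseteq> alpha_classes"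
  unfolding deriv_nm_def by auto

lemma deriv_bar_subset: "deriv_bar S a \<subseteq> alpha_classes"
  unfolding deriv_bar_def by auto

lemma deriv_nm_eqvt:
  "S \<subseteq> alpha_classes \<Longrightarrow> deriv_nm (lang_act p S) (p \<langle>$\<rangle> a) = lang_act p (deriv_nm S a)"
  by (rule alpha_classes_eqI)
    (simp_all add: deriv_nm_subset lang_act_subset mem_lang_act_iff mem_deriv_nm_iff)

lemma deriv_bar_eqvt:
  "S \<subseteq> alpha_classes \<Longrightarrow> deriv_bar (lang_act p S) (p \<langle>$\<rangle> a) = lang_act p (deriv_bar S a)"
  by (rule alpha_classes_eqI)
    (simp_all add: deriv_bar_subset lang_act_subset mem_lang_act_iff mem_deriv_bar_iff)

lemma bar_langs_subset: "S \<in> bar_langs \<Longrightarrow> S \<subseteq> alpha_classes"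
  unfolding bar_langs_def by blast

lemma bar_langsI: "S \<subseteq> alpha_classes \<Longrightarrow> finite A \<Longrightarrow> supports lang_act A S \<Longrightarrow> S \<in> bar_langs"
  unfolding bar_langs_def fin_supp_def by blast

lemma bar_langsE:
  assumes "S \<in> bar_langs"
  obtains A where "finite A" "supports lang_act A S"
  using assms unfolding bar_langs_def fin_supp_def by blast

lemma lang_act_in_bar_langs:
  assumes S: "S \<in> bar_langs"
  shows "lang_act p S \<in> bar_langs"
proof -
  obtain A where A: "finite A" "supports lang_act A S"
    using S by (rule bar_langsE)
  have "supports lang_act (apply p ` A) (lang_act p S)"
    using lang_act_times[OF bar_langs_subset[OF S]] A(2) by (rule supports_act)
  with A(1) show ?thesis
    by (intro bar_langsI lang_act_subset bar_langs_subset[OF S]) simp_all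
qed

lemma nominal_bar_langs: "nominal lang_act bar_langs"
  unfolding nominal_def is_action_def
  by (simp add: lang_act_in_bar_langs lang_act_one lang_act_times bar_langs_subset)
    (simp add: bar_langs_def)

lemma supports_deriv:
  assumes eqvt: "\<And>p. D (lang_act p S) (p \<langle>$\<rangle> a) = lang_act p (D S a)"
    and A: "supports lang_act A S"
  shows "supports lang_act (insert a A) (D S a)"
  unfolding supports_def
proof (intro allI impI)
  fix p assume p: "\<forall>b\<in>insert a A. p \<langle>$\<rangle> b = b"
  then have "lang_act p S = S"
    using A unfolding supports_def by blast
  with p eqvt[of p] show "lang_act p (D S a) = D S a"
    by simp
qed

lemma deriv_nm_in_bar_langs:
  assumes S: "S \<in> bar_langs"
  shows "deriv_nm S a \<in> bar_langs"
proof -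
  obtain A where "finite A" "supports lang_act A S"
    using S by (rule bar_langsE)
  then show ?thesis
    using supports_deriv[OF deriv_nm_eqvt[OF bar_langs_subset[OF S]]]
    by (intro bar_langsI[OF deriv_nm_subset, of "insert a A"]) simp_all
qed

lemma deriv_bar_in_bar_langs:
  assumes S: "S \<in> bar_langs"
  shows "deriv_bar S a \<in> bar_langs"
proof -
  obtain A where "finite A" "supports lang_act A S"
    using S by (rule bar_langsE)
  then show ?thesis
    using supports_deriv[OF deriv_bar_eqvt[OF bar_langs_subset[OF S]]]
    by (intro bar_langsI[OF deriv_bar_subset, of "insert a A"]) simp_all
qed

lemma fresh_deriv_bar:
  assumes S: "S \<in> bar_langs" and "fresh lang_act c S" "c \<noteq> a"
  shows "fresh lang_act c (deriv_bar S a)"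
proof -
  obtain A where "finite A" "supports lang_act A S" "c \<notin> A"
    using assms(2) unfolding fresh_iff by blast
  then show ?thesis
    using supports_deriv[OF deriv_bar_eqvt[OF bar_langs_subset[OF S]]] \<open>c \<noteq> a\<close>
    unfolding fresh_iff by (intro exI[of _ "insert a A"]) simp
qed

lemma fun_act_deriv_nm:
  "S \<subseteq> alpha_classes \<Longrightarrow> fun_act lang_act p (deriv_nm S) = deriv_nm (lang_act p S)"
proof
  fix a assume "S \<subseteq> alpha_classes"
  then show "fun_act lang_act p (deriv_nm S) a = deriv_nm (lang_act p S) a"
    unfolding fun_act_def using deriv_nm_eqvt[of S p "inverse p \<langle>$\<rangle> a"] by simp
qed

lemma deriv_nm_in_exp_carrier:
  assumes S: "S \<in> bar_langs"
  shows "deriv_nm S \<in> exp_carrier lang_act bar_langs"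
proof -
  obtain A where A: "finite A" "supports lang_act A S"
    using S by (rule bar_langsE)
  have "supports (fun_act lang_act) A (deriv_nm S)"
    using A(2) fun_act_deriv_nm[OF bar_langs_subset[OF S]] unfolding supports_def by simp
  with A(1) show ?thesis
    unfolding exp_carrier_def fin_supp_def using deriv_nm_in_bar_langs[OF S] by blast
qed

lemma ex_fresh_bar_lang:
  fixes S :: "'a::infinite blang"
  assumes "S \<in> bar_langs"
  shows "\<exists>a. fresh lang_act a S"
  using obtain_fresh_for[OF nominal_bar_langs _ assms assms, of "{}"] by blast

lemma deriv_bar_swap_fresh:
  fixes S :: "'a::infinite blang"
  assumes S: "S \<in> bar_langs" and "fresh lang_act a S" "fresh lang_act b S"
  shows "lang_act \<langle>a \<leftrightarrow> b\<rangle> (deriv_bar S a) = deriv_bar S b"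
  using deriv_bar_eqvt[OF bar_langs_subset[OF S], of "\<langle>a \<leftrightarrow> b\<rangle>" a]
    act_swap_fresh[OF nominal_is_action[OF nominal_bar_langs] S assms(2,3)]
  by simp

lemma abs_deriv_bar_fresh_indep:
  fixes S :: "'a::infinite blang"
  assumes S: "S \<in> bar_langs" and a: "fresh lang_act a S" and b: "fresh lang_act b S"
  shows "abs_cls lang_act bar_langs a (deriv_bar S a)
    = abs_cls lang_act bar_langs b (deriv_bar S b)"
proof (cases "a = b")
  case False
  then have "abs_cls lang_act bar_langs b (lang_act \<langle>a \<leftrightarrow> b\<rangle> (deriv_bar S a))
      = abs_cls lang_act bar_langs a (deriv_bar S a)"
    by (intro abs_cls_swap[OF nominal_bar_langs deriv_bar_in_bar_langs[OF S]]
        fresh_deriv_bar[OF S b]) auto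
  then show ?thesis
    by (simp add: deriv_bar_swap_fresh[OF S a b])
qed simp

lemma snd_snd_tau:
  fixes S :: "'a::infinite blang"
  assumes "S \<in> bar_langs" and "fresh lang_act a S"
  shows "snd (snd (tau S)) = abs_cls lang_act bar_langs a (deriv_bar S a)"
  unfolding tau_def Let_def
  using abs_deriv_bar_fresh_indep[OF assms(1) someI_ex[OF ex_fresh_bar_lang[OF assms(1)]] assms(2)]
  by simp

lemma G_act_simps [simp]: "G_act act p (b, f, \<alpha>) = (b, fun_act act p f, abs_act act p \<alpha>)"
  unfolding G_act_def by simp

lemma G_map_simps [simp]: "G_map actY Y h (b, f, \<alpha>) = (b, h \<circ> f, abs_map actY Y h \<alpha>)"
  unfolding G_map_def by simp

lemma tau_eqvt:
  fixes S :: "'a::infinite blang"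
  assumes S: "S \<in> bar_langs"
  shows "tau (lang_act p S) = G_act lang_act p (tau S)"
proof -
  obtain a where a: "fresh lang_act a S"
    using ex_fresh_bar_lang[OF S] by blast
  have "snd (snd (tau (lang_act p S)))
      = abs_cls lang_act bar_langs (p \<langle>$\<rangle> a) (deriv_bar (lang_act p S) (p \<langle>$\<rangle> a))"
    by (rule snd_snd_tau[OF lang_act_in_bar_langs[OF S]])
      (rule fresh_act[OF nominal_is_action[OF nominal_bar_langs] S a])
  also have "\<dots> = abs_act lang_act p (abs_cls lang_act bar_langs a (deriv_bar S a))"
    by (simp add: deriv_bar_eqvt[OF bar_langs_subset[OF S]]
        abs_act_cls[OF nominal_bar_langs deriv_bar_in_bar_langs[OF S]])
  finally have "snd (snd (tau (lang_act p S))) = abs_act lang_act p (snd (snd (tau S)))"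
    by (simp add: snd_snd_tau[OF S a])
  moreover have "(alpha_cls [] \<in> lang_act p S) = (alpha_cls [] \<in> S)"
    using mem_lang_act_iff[OF bar_langs_subset[OF S], of "[]" p] by simp
  ultimately show ?thesis
    by (simp add: tau_def fun_act_deriv_nm[OF bar_langs_subset[OF S]])
qed

lemma tau_in_G_carrier:
  fixes S :: "'a::infinite blang"
  assumes S: "S \<in> bar_langs"
  shows "tau S \<in> G_carrier lang_act bar_langs"
proof -
  obtain a where a: "fresh lang_act a S"
    using ex_fresh_bar_lang[OF S] by blast
  have "snd (snd (tau S)) \<in> abs_carrier lang_act bar_langs"
    unfolding snd_snd_tau[OF S a] abs_carrier_def using deriv_bar_in_bar_langs[OF S] by blast
  then show ?thesis
    unfolding G_carrier_def using deriv_nm_in_exp_carrier[OF S]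
    by (simp add: tau_def Let_def)
qed

lemma G_coalg_tau: "G_coalg (lang_act :: 'a::infinite perm \<Rightarrow> 'a blang \<Rightarrow> 'a blang) bar_langs tau"
  unfolding G_coalg_def equivariant_def
  using nominal_bar_langs tau_in_G_carrier tau_eqvt by blast

section \<open>Finality\<close>

text \<open>A bar letter |a can only be followed along a representative (a, y) of the abstraction
  <a0>x0; such a representative exists only for a = a0 or a fresh for x0. Closing under
  alpha-equivalence in lang_of makes up for the bar names that are excluded.\<close>

fun accepts :: "('x \<Rightarrow> ('a, 'x) G) \<Rightarrow> 'a barl list \<Rightarrow> 'x \<Rightarrow> bool" where
  "accepts c [] x \<longleftrightarrow> fst (c x)"
| "accepts c (Nm a # v) x \<longleftrightarrow> accepts c v (fst (snd (c x)) a)"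
| "accepts c (Bar a # v) x \<longleftrightarrow> (\<exists>y. (a, y) \<in> snd (snd (c x)) \<and> accepts c v y)"

definition lang_of :: "('x \<Rightarrow> ('a, 'x) G) \<Rightarrow> 'x \<Rightarrow> 'a blang" where
  "lang_of c x = {alpha_cls u | u. accepts c u x}"

lemma mem_lang_of_iff: "alpha_cls w \<in> lang_of c x \<longleftrightarrow> (\<exists>u. alpha_eq w u \<and> accepts c u x)"
  unfolding lang_of_def by (auto simp: alpha_cls_eq_iff)

lemma lang_of_subset: "lang_of c x \<subseteq> alpha_classes"
  unfolding lang_of_def by auto

context
  fixes act :: "'a::infinite perm \<Rightarrow> 'x \<Rightarrow> 'x" and X :: "'x set" and c :: "'x \<Rightarrow> ('a, 'x) G"
  assumes co: "G_coalg act X c"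
begin

lemma coalg_nominal: "nominal act X"
  using co unfolding G_coalg_def by blast

lemma coalg_action: "is_action act X"
  using coalg_nominal by (rule nominal_is_action)

lemma coalg_eqvt: "x \<in> X \<Longrightarrow> c (act p x) = G_act act p (c x)"
  using co unfolding G_coalg_def equivariant_def by blast

lemma coalg_in_G_carrier: "x \<in> X \<Longrightarrow> c x \<in> G_carrier act X"
  using co unfolding G_coalg_def equivariant_def by blast

lemma coalg_next_in:
  assumes "x \<in> X"
  shows "fst (snd (c x)) a \<in> X"
  using coalg_in_G_carrier[OF assms] unfolding G_carrier_def exp_carrier_def by auto

lemma coalg_absE:
  assumes "x \<in> X"
  obtains a0 x0 where "x0 \<in> X" "snd (snd (c x)) = abs_cls act X a0 x0"
  using coalg_in_G_carrier[OF assms] unfolding G_carrier_def abs_carrier_def by auto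

lemma coalg_abs_memD: "x \<in> X \<Longrightarrow> (a, y) \<in> snd (snd (c x)) \<Longrightarrow> y \<in> X"
  by (metis coalg_absE abs_cls_memD[OF coalg_nominal])

lemma accepts_eqvt: "x \<in> X \<Longrightarrow> accepts c (bs_act p w) (act p x) = accepts c w x"
proof (induction w arbitrary: x)
  case Nil
  then show ?case
    by (cases "c x") (simp add: coalg_eqvt)
next
  case (Cons l v)
  obtain b f \<alpha> where cx: "c x = (b, f, \<alpha>)"
    by (cases "c x") auto
  show ?case
  proof (cases l)
    case (Nm a)
    have "f a \<in> X"
      using coalg_next_in[OF Cons.prems, of a] cx by simp
    then show ?thesis
      using Nm cx Cons.IH by (simp add: coalg_eqvt[OF Cons.prems] fun_act_def)
  next
    case (Bar a)
    have "(\<exists>y. (p \<langle>$\<rangle> a, y) \<in> abs_act act p \<alpha> \<and> accepts c (bs_act p v) y)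
        \<longleftrightarrow> (\<exists>y. (a, y) \<in> \<alpha> \<and> accepts c (bs_act p v) (act p y))"
      unfolding abs_act_def by (auto simp: apply_inj)
    also have "\<dots> \<longleftrightarrow> (\<exists>y. (a, y) \<in> \<alpha> \<and> accepts c v y)"
      using coalg_abs_memD[OF Cons.prems] cx Cons.IH by auto
    finally show ?thesis
      using Bar cx by (simp add: coalg_eqvt[OF Cons.prems])
  qed
qed

lemma lang_of_eqvt:
  assumes x: "x \<in> X"
  shows "lang_of c (act p x) = lang_act p (lang_of c x)"
proof (rule alpha_classes_eqI[OF lang_of_subset lang_act_subset[OF lang_of_subset]])
  fix w
  have "(\<exists>u. alpha_eq w u \<and> accepts c u (act p x))
      \<longleftrightarrow> (\<exists>u. alpha_eq (bs_act (inverse p) w) u \<and> accepts c u x)"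
  proof
    assume "\<exists>u. alpha_eq w u \<and> accepts c u (act p x)"
    then obtain u where "alpha_eq w u" "accepts c u (act p x)"
      by blast
    then show "\<exists>u. alpha_eq (bs_act (inverse p) w) u \<and> accepts c u x"
      using accepts_eqvt[OF x, of p "bs_act (inverse p) u"]
      by (intro exI[of _ "bs_act (inverse p) u"]) (simp add: alpha_eq_eqvt)
  next
    assume "\<exists>u. alpha_eq (bs_act (inverse p) w) u \<and> accepts c u x"
    then obtain u where "alpha_eq (bs_act (inverse p) w) u" "accepts c u x"
      by blast
    then show "\<exists>u. alpha_eq w u \<and> accepts c u (act p x)"
      using accepts_eqvt[OF x, of p u] alpha_eq_eqvt[of _ u p]
      by (intro exI[of _ "bs_act p u"]) fastforce
  qed
  then show "alpha_cls w \<in> lang_of c (act p x) \<longleftrightarrow> alpha_cls w \<in> lang_act p (lang_of c x)"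
    by (simp add: mem_lang_of_iff mem_lang_act_iff[OF lang_of_subset])
qed

lemma equivariant_lang_of: "equivariant act X lang_act bar_langs (lang_of c)"
proof -
  have "lang_of c x \<in> bar_langs" if x: "x \<in> X" for x
  proof -
    obtain A where A: "finite A" "supports act A x"
      using coalg_nominal x unfolding nominal_def fin_supp_def by blast
    then have "supports lang_act A (lang_of c x)"
      unfolding supports_def by (metis lang_of_eqvt[OF x])
    with A(1) show ?thesis
      by (rule bar_langsI[OF lang_of_subset])
  qed
  then show ?thesis
    unfolding equivariant_def using lang_of_eqvt by blast
qed

lemma lang_of_Nil: "alpha_cls [] \<in> lang_of c x \<longleftrightarrow> fst (c x)"
proof
  show "alpha_cls [] \<in> lang_of c x \<Longrightarrow> fst (c x)"
    unfolding mem_lang_of_iff by (auto dest: alpha_eq_NilD)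
  show "fst (c x) \<Longrightarrow> alpha_cls [] \<in> lang_of c x"
    unfolding mem_lang_of_iff by (auto intro: exI[of _ "[]"])
qed

lemma lang_of_Nm:
  "alpha_cls (Nm a # v) \<in> lang_of c x \<longleftrightarrow> alpha_cls v \<in> lang_of c (fst (snd (c x)) a)"
  unfolding mem_lang_of_iff by (fastforce dest: alpha_eq_NmD intro: alpha_eq_Cons)

lemma lang_of_Bar:
  assumes x: "x \<in> X" and cx: "snd (snd (c x)) = abs_cls act X a0 x0" and x0: "x0 \<in> X"
    and d: "d \<noteq> a0" "fresh act d x0"
  shows "alpha_cls (Bar d # w) \<in> lang_of c x \<longleftrightarrow> alpha_cls w \<in> lang_of c (act \<langle>a0 \<leftrightarrow> d\<rangle> x0)"
proof
  assume "alpha_cls (Bar d # w) \<in> lang_of c x"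
  then obtain b v y where dw: "alpha_abs d w b v" and mem: "(b, y) \<in> abs_cls act X a0 x0"
    and acc: "accepts c v y"
    unfolding mem_lang_of_iff using cx by (auto dest!: alpha_eq_BarD)
  have y: "y \<in> X" and r: "abs_rel act (a0, x0) (b, y)"
    using abs_cls_memD[OF coalg_nominal mem] by auto
  obtain e where e: "e \<notin> bs_names w \<union> bs_names v \<union> {d, b, a0}" "fresh act e x0" "fresh act e y"
    using obtain_fresh_for[OF coalg_nominal _ x0 y, of "bs_names w \<union> bs_names v \<union> {d, b, a0}"]
    by auto
  define u where "u = bs_act \<langle>d \<leftrightarrow> e\<rangle> (bs_act \<langle>b \<leftrightarrow> e\<rangle> v)"
  have "alpha_eq (bs_act \<langle>d \<leftrightarrow> e\<rangle> w) (bs_act \<langle>b \<leftrightarrow> e\<rangle> v)"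
    using dw e(1) unfolding alpha_abs_def by auto
  then have "alpha_eq w u"
    using alpha_eq_eqvt[of _ _ "\<langle>d \<leftrightarrow> e\<rangle>"] unfolding u_def
    by (fastforce simp: bs_act_times[symmetric])
  moreover have "act \<langle>b \<leftrightarrow> e\<rangle> y = act \<langle>a0 \<leftrightarrow> e\<rangle> x0"
    using abs_rel_any_fresh[OF coalg_nominal x0 y r, of e] e by simp
  then have "act \<langle>d \<leftrightarrow> e\<rangle> (act \<langle>b \<leftrightarrow> e\<rangle> y) = act \<langle>a0 \<leftrightarrow> d\<rangle> x0"
    using e d by (simp add: swap_sym[of d e] act_swap_swap_fresh[OF coalg_action x0])
  moreover have "accepts c u (act \<langle>d \<leftrightarrow> e\<rangle> (act \<langle>b \<leftrightarrow> e\<rangle> y))"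
    unfolding u_def using acc y
    by (simp add: accepts_eqvt action_closed[OF coalg_action])
  ultimately show "alpha_cls w \<in> lang_of c (act \<langle>a0 \<leftrightarrow> d\<rangle> x0)"
    unfolding mem_lang_of_iff by auto
next
  assume "alpha_cls w \<in> lang_of c (act \<langle>a0 \<leftrightarrow> d\<rangle> x0)"
  then obtain u where "alpha_eq w u" "accepts c u (act \<langle>a0 \<leftrightarrow> d\<rangle> x0)"
    unfolding mem_lang_of_iff by blast
  moreover have "(d, act \<langle>a0 \<leftrightarrow> d\<rangle> x0) \<in> snd (snd (c x))"
    using abs_cls_self_mem[OF coalg_nominal action_closed[OF coalg_action x0], of d "\<langle>a0 \<leftrightarrow> d\<rangle>"]
    unfolding cx abs_cls_swap[OF coalg_nominal x0 d] .
  ultimately show "alpha_cls (Bar d # w) \<in> lang_of c x"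
    unfolding mem_lang_of_iff by (auto intro!: exI[of _ "Bar d # u"] alpha_eq_Cons)
qed

lemma G_hom_lang_of: "G_hom act X c lang_act bar_langs tau (lang_of c)"
  unfolding G_hom_def
proof (intro conjI ballI)
  show "equivariant act X lang_act bar_langs (lang_of c)"
    by (rule equivariant_lang_of)
  fix x assume x: "x \<in> X"
  obtain a0 x0 where x0: "x0 \<in> X" and cx: "snd (snd (c x)) = abs_cls act X a0 x0"
    using x by (rule coalg_absE)
  have L: "lang_of c x \<in> bar_langs" "lang_of c x0 \<in> bar_langs"
    using equivariant_lang_of x x0 unfolding equivariant_def by blast+
  obtain e where e: "e \<notin> {a0} \<union> supp lang_act (lang_of c x)" "fresh act e x0"
    using obtain_fresh_for[OF coalg_nominal _ x0 x0, of "{a0} \<union> supp lang_act (lang_of c x)"]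
      nominal_finite_supp[OF nominal_bar_langs L(1)] by auto
  have "fresh lang_act e (lang_of c x)"
    using e(1) unfolding fresh_def by blast
  have "deriv_bar (lang_of c x) e = lang_of c (act \<langle>a0 \<leftrightarrow> e\<rangle> x0)"
    by (rule alpha_classes_eqI[OF deriv_bar_subset lang_of_subset])
      (use lang_of_Bar[OF x cx x0] e in \<open>auto simp: mem_deriv_bar_iff\<close>)
  then have "snd (snd (tau (lang_of c x)))
      = abs_cls lang_act bar_langs e (lang_act \<langle>a0 \<leftrightarrow> e\<rangle> (lang_of c x0))"
    using snd_snd_tau[OF L(1) \<open>fresh lang_act e (lang_of c x)\<close>] by (simp add: lang_of_eqvt[OF x0])
  also have "\<dots> = abs_cls lang_act bar_langs a0 (lang_of c x0)"
    using e by (intro abs_cls_swap[OF nominal_bar_langs L(2)]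
        fresh_equivariant[OF equivariant_lang_of x0]) auto
  also have "\<dots> = abs_map lang_act bar_langs (lang_of c) (snd (snd (c x)))"
    unfolding cx
    by (rule abs_map_cls[OF coalg_nominal nominal_bar_langs equivariant_lang_of x0, symmetric])
  finally show "tau (lang_of c x) = G_map lang_act bar_langs (lang_of c) (c x)"
    by (cases "c x") (simp add: tau_def lang_of_Nil fun_eq_iff lang_of_Nm
        alpha_classes_eqI[OF deriv_nm_subset lang_of_subset] mem_deriv_nm_iff)
qed

context
  fixes h :: "'x \<Rightarrow> 'a blang"
  assumes hom: "G_hom act X c lang_act bar_langs tau h"
begin

private lemma hom_equivariant: "equivariant act X lang_act bar_langs h"
  using hom unfolding G_hom_def by blast

private lemma hom_tau: "x \<in> X \<Longrightarrow> tau (h x) = G_map lang_act bar_langs h (c x)"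
  using hom unfolding G_hom_def by blast

lemma G_hom_Nil: "x \<in> X \<Longrightarrow> alpha_cls [] \<in> h x \<longleftrightarrow> fst (c x)"
  using hom_tau[of x] by (cases "c x") (simp add: tau_def)

lemma G_hom_Nm:
  "x \<in> X \<Longrightarrow> alpha_cls (Nm a # v) \<in> h x \<longleftrightarrow> alpha_cls v \<in> h (fst (snd (c x)) a)"
  using hom_tau[of x] by (cases "c x") (simp add: tau_def mem_deriv_nm_iff[symmetric])

lemma G_hom_Bar:
  assumes x: "x \<in> X" and cx: "snd (snd (c x)) = abs_cls act X a0 x0" and x0: "x0 \<in> X"
    and d: "d \<noteq> a0" "fresh act d x0" "fresh act d x"
  shows "alpha_cls (Bar d # v) \<in> h x \<longleftrightarrow> alpha_cls v \<in> h (act \<langle>a0 \<leftrightarrow> d\<rangle> x0)"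
proof -
  have hx: "h x \<in> bar_langs" and hx0: "h x0 \<in> bar_langs"
    using hom_equivariant x x0 unfolding equivariant_def by blast+
  have "abs_cls lang_act bar_langs d (deriv_bar (h x) d) = snd (snd (tau (h x)))"
    using fresh_equivariant[OF hom_equivariant x d(3)] by (rule snd_snd_tau[OF hx, symmetric])
  also have "\<dots> = abs_cls lang_act bar_langs a0 (h x0)"
    using hom_tau[OF x] cx
    by (cases "c x") (simp add: abs_map_cls[OF coalg_nominal nominal_bar_langs hom_equivariant x0])
  finally have "deriv_bar (h x) d = lang_act \<langle>a0 \<leftrightarrow> d\<rangle> (h x0)"
    using d fresh_equivariant[OF hom_equivariant x0 d(2)]
    by (intro abs_cls_eq_swapD[OF nominal_bar_langs hx0 deriv_bar_in_bar_langs[OF hx]])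
  also have "\<dots> = h (act \<langle>a0 \<leftrightarrow> d\<rangle> x0)"
    using hom_equivariant x0 unfolding equivariant_def by simp
  finally show ?thesis
    by (simp add: mem_deriv_bar_iff[symmetric])
qed

end

lemma G_hom_mem_eq:
  assumes h1: "G_hom act X c lang_act bar_langs tau h1"
    and h2: "G_hom act X c lang_act bar_langs tau h2"
    and x: "x \<in> X"
  shows "alpha_cls w \<in> h1 x \<longleftrightarrow> alpha_cls w \<in> h2 x"
  using x
proof (induction w arbitrary: x rule: length_induct)
  case (1 w)
  show ?case
  proof (cases w)
    case Nil
    then show ?thesis
      using G_hom_Nil[OF h1 "1.prems"] G_hom_Nil[OF h2 "1.prems"] by simp
  next
    case (Cons l v)
    then have IH: "\<And>v' y. length v' = length v \<Longrightarrow> y \<in> X \<Longrightarrow>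
        alpha_cls v' \<in> h1 y \<longleftrightarrow> alpha_cls v' \<in> h2 y"
      using "1.IH" by simp
    show ?thesis
    proof (cases l)
      case (Nm a)
      then show ?thesis
        using Cons IH[of v] G_hom_Nm[OF h1 "1.prems"] G_hom_Nm[OF h2 "1.prems"]
          coalg_next_in[OF "1.prems"] by simp
    next
      case (Bar a)
      obtain a0 x0 where x0: "x0 \<in> X" and cx: "snd (snd (c x)) = abs_cls act X a0 x0"
        using "1.prems" by (rule coalg_absE)
      obtain d where d: "d \<notin> bs_names v \<union> {a0}" "fresh act d x0" "fresh act d x"
        using obtain_fresh_for[OF coalg_nominal _ x0 "1.prems", of "bs_names v \<union> {a0}"] by auto
      let ?v = "bs_act \<langle>a \<leftrightarrow> d\<rangle> v"
      have "alpha_cls (Bar a # v) = alpha_cls (Bar d # ?v)"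
        using d(1) by (simp add: alpha_cls_eq_iff alpha_eq_rename)
      moreover have "act \<langle>a0 \<leftrightarrow> d\<rangle> x0 \<in> X"
        using x0 by (rule action_closed[OF coalg_action])
      ultimately show ?thesis
        using Cons Bar d IH[of ?v] G_hom_Bar[OF h1 "1.prems" cx x0] G_hom_Bar[OF h2 "1.prems" cx x0]
        by simp
    qed
  qed
qed

lemma G_hom_unique:
  assumes h1: "G_hom act X c lang_act bar_langs tau h1"
    and h2: "G_hom act X c lang_act bar_langs tau h2"
    and x: "x \<in> X"
  shows "h1 x = h2 x"
proof -
  have "h1 x \<in> bar_langs" "h2 x \<in> bar_langs"
    using h1 h2 x unfolding G_hom_def equivariant_def by blast+
  then show ?thesis
    using G_hom_mem_eq[OF h1 h2 x] by (intro alpha_classes_eqI bar_langs_subset)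
qed

end

theorem proposition4p18:
  fixes dummy_name :: "'a::{countable,infinite}"
  shows "G_coalg (lang_act :: 'a perm \<Rightarrow> 'a blang \<Rightarrow> 'a blang) bar_langs tau
    \<and> (\<forall>S\<in>(bar_langs :: 'a blang set). \<forall>a. fresh lang_act a S \<longrightarrow>
          snd (snd (tau S)) = abs_cls lang_act bar_langs a (deriv_bar S a))
    \<and> (\<forall>(act :: 'a perm \<Rightarrow> 'x \<Rightarrow> 'x) X c. G_coalg act X c \<longrightarrow>
          (\<exists>h. G_hom act X c lang_act bar_langs tau h \<and>
               (\<forall>h'. G_hom act X c lang_act bar_langs tau h' \<longrightarrow> (\<forall>x\<in>X. h' x = h x))))"
proof (intro conjI ballI allI impI)
  show "G_coalg (lang_act :: 'a perm \<Rightarrow> 'a blang \<Rightarrow> 'a blang) bar_langs tau"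
    by (rule G_coalg_tau)
next
  fix S :: "'a blang" and a
  assume "S \<in> bar_langs" "fresh lang_act a S"
  then show "snd (snd (tau S)) = abs_cls lang_act bar_langs a (deriv_bar S a)"
    by (rule snd_snd_tau)
next
  fix act :: "'a perm \<Rightarrow> 'x \<Rightarrow> 'x" and X c
  assume co: "G_coalg act X c"
  show "\<exists>h. G_hom act X c lang_act bar_langs tau h \<and>
      (\<forall>h'. G_hom act X c lang_act bar_langs tau h' \<longrightarrow> (\<forall>x\<in>X. h' x = h x))"
  proof (intro exI conjI allI impI ballI)
    show "G_hom act X c lang_act bar_langs tau (lang_of c)"
      using co by (rule G_hom_lang_of)
    fix h' x
    assume "G_hom act X c lang_act bar_langs tau h'" "x \<in> X"
    then show "h' x = lang_of c x"
      by (rule G_hom_unique[OF co _ G_hom_lang_of[OF co]])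
  qed
qed

end
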